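(* Let $\Delta\ge3$. The problem $\Pi^{\mathsf{orcx}}$ cannot be solved in $0$ rounds in the (deterministic) port-numbering model on $\Delta$-regular graphs, even if a proper $\Delta$-edge coloring with colors $1,\dots,\Delta$ is given as input.
   Context: Node-edge-checkable problems label the half-edges of a $\Delta$-regular graph. The node constraint lists the allowed multisets of the $\Delta$ labels at a node, and the edge constraint lists the allowed multisets of the two labels on an edge. In the port-numbering model each node has a numbering $1,\dots,\Delta$ of its incident edges and no identifiers. A $0$-round algorithm chooses labels for its incident half-edges as a function of its port numbering and the input colors on its incident edges only. $\Pi^{\mathsf{orcx}}$ has labels $\Sigma_1\cup\Sigma_2$ with $\Sigma_1=\{\mathsf O,\mathsf R,\mathsf C,\mathsf X\}$ and $\Sigma_2=\{\mathsf o,\mathsf r,\mathsf c,\mathsf x\}$. Its node configurations are the $L_1\dots L_\Delta$ such that: - exactly one $L_k$ lies in $\Sigma_1$; and - there are distinct $k,k'$ with all other $L_{k''}\in\{\mathsf O,\mathsf o\}$, and either ($L_k\in\{\mathsf X,\mathsf x\}$ and $L_{k'}\in\{\mathsf O,\mathsf o\}$) or ($L_k\in\{\mathsf R,\mathsf r\}$ and $L_{k'}\in\{\mathsf C,\mathsf c\}$). Its edge configurations are all configurations in $[\mathsf O]\,[\mathsf O\mathsf R\mathsf C\mathsf X]$, $[\mathsf O\mathsf R]\,[\mathsf O\mathsf R]$, $[\mathsf O\mathsf C]\,[\mathsf O\mathsf C]$, $[\mathsf o]\,[\mathsf o\mathsf r\mathsf c\mathsf x]$ and $[\mathsf o\mathsf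 r]\,[\mathsf o\mathsf c]$, where $[S]\,[S']$ denotes all pairs with one entry from $S$ and the other from $S'$. *)

theory Defs
  imports Main
begin

text \<open>Labels: Sigma_1 = {O,R,C,X} (suffix 1), Sigma_2 = {o,r,c,x} (suffix 2).\<close>
datatype label = O1 | R1 | C1 | X1 | o2 | r2 | c2 | x2

definition in_Sigma1 :: "label \<Rightarrow> bool" where
  "in_Sigma1 l \<longleftrightarrow> l \<in> {O1, R1, C1, X1}"

text \<open>Node constraint of Pi^orcx on the labels L_1..L_Delta (list of length Delta,
  indices 0..Delta-1; the condition is invariant under permutation, i.e. a
  condition on the multiset).\<close>
definition orcx_node_ok :: "label list \<Rightarrow> bool" where
  "orcx_node_ok L \<longleftrightarrow>
     card {k. k < length L \<and> in_Sigma1 (L ! k)} = 1 \<and>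
     (\<exists>k k'. k < length L \<and> k' < length L \<and> k \<noteq> k' \<and>
        (\<forall>k''. k'' < length L \<and> k'' \<noteq> k \<and> k'' \<noteq> k' \<longrightarrow> L ! k'' \<in> {O1, o2}) \<and>
        ((L ! k \<in> {X1, x2} \<and> L ! k' \<in> {O1, o2}) \<or>
         (L ! k \<in> {R1, r2} \<and> L ! k' \<in> {C1, c2})))"

text \<open>[S][S']: one entry from S, the other from S' (unordered).\<close>
definition pair_in :: "label set \<Rightarrow> label set \<Rightarrow> label \<Rightarrow> label \<Rightarrow> bool" where
  "pair_in S S' a b \<longleftrightarrow> (a \<in> S \<and> b \<in> S') \<or> (b \<in> S \<and> a \<in> S')"

definition orcx_edge_ok :: "label \<Rightarrow> label \<Rightarrow> bool" where
  "orcx_edge_ok a b \<longleftrightarrow>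
     pair_in {O1} {O1, R1, C1, X1} a b \<or>
     pair_in {O1, R1} {O1, R1} a b \<or>
     pair_in {O1, C1} {O1, C1} a b \<or>
     pair_in {o2} {o2, r2, c2, x2} a b \<or>
     pair_in {o2, r2} {o2, c2} a b"

text \<open>For v in V and port i < Delta, nbr v i is the
  neighbour reached through port i, and back v i is the port number of that edge
  at the neighbour.\<close>
definition port_graph :: "nat \<Rightarrow> nat set \<Rightarrow> (nat \<Rightarrow> nat \<Rightarrow> nat) \<Rightarrow> (nat \<Rightarrow> nat \<Rightarrow> nat) \<Rightarrow> bool" where
  "port_graph \<Delta> V nbr back \<longleftrightarrow> finite V \<and>
     (\<forall>v\<in>V. \<forall>i<\<Delta>.
        nbr v i \<in> V \<and> back v i < \<Delta> \<and>
        nbr (nbr v i) (back v i) = v \<and> back (nbr v i) (back v i) = i \<and>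
        nbr v i \<noteq> v) \<and>
     (\<forall>v\<in>V. inj_on (nbr v) {..<\<Delta>})"

text \<open>Proper Delta-edge colouring with colours 1..Delta, given on half-edges
  (both half-edges of an edge get the colour of the edge).\<close>
definition proper_edge_coloring :: "nat \<Rightarrow> nat set \<Rightarrow> (nat \<Rightarrow> nat \<Rightarrow> nat) \<Rightarrow> (nat \<Rightarrow> nat \<Rightarrow> nat) \<Rightarrow> (nat \<Rightarrow> nat \<Rightarrow> nat) \<Rightarrow> bool" where
  "proper_edge_coloring \<Delta> V nbr back col \<longleftrightarrow>
     (\<forall>v\<in>V. \<forall>i<\<Delta>. col v i \<in> {1..\<Delta>} \<and> col (nbr v i) (back v i) = col v i) \<and>
     (\<forall>v\<in>V. inj_on (col v) {..<\<Delta>})"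

text \<open>A 0-round algorithm: maps the list of input colours at ports 0..Delta-1 of a
  node to a label for each port. Output of node v on its port i:\<close>
definition zero_round_output :: "nat \<Rightarrow> (nat list \<Rightarrow> nat \<Rightarrow> label) \<Rightarrow> (nat \<Rightarrow> nat \<Rightarrow> nat) \<Rightarrow> nat \<Rightarrow> nat \<Rightarrow> label" where
  "zero_round_output \<Delta> A col v i = A (map (col v) [0..<\<Delta>]) i"

definition solves_orcx :: "nat \<Rightarrow> (nat list \<Rightarrow> nat \<Rightarrow> label) \<Rightarrow> bool" where
  "solves_orcx \<Delta> A \<longleftrightarrow>
     (\<forall>V nbr back col. port_graph \<Delta> V nbr back \<and> proper_edge_coloring \<Delta> V nbr back col \<longrightarrow>
        (\<forall>v\<in>V. orcx_node_ok (map (zero_round_output \<Delta> A col v) [0..<\<Delta>])) \<and>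
        (\<forall>v\<in>V. \<forall>i<\<Delta>. orcx_edge_ok (zero_round_output \<Delta> A col v i)
                                    (zero_round_output \<Delta> A col (nbr v i) (back v i))))"

end

theory Submission
  imports Defs
begin

text \<open>Take the complete bipartite graph \<open>K\<^sub>\<Delta>\<^sub>,\<^sub>\<Delta>\<close> with port numbers and colours chosen so
  that every edge has the same port number \<open>i\<close> at both endpoints and colour \<open>i + 1\<close>.
  Every node then sees the same input, so a 0-round algorithm gives every node the same
  labelling and both half-edges of an edge the same label. The only labels compatible with
  themselves on an edge are \<open>O\<close>, \<open>R\<close>, \<open>C\<close> and \<open>o\<close>; so a node configuration has no \<open>X\<close> or \<open>x\<close>,
  hence contains both \<open>R\<close> and \<open>C\<close>, i.e. two labels of \<open>\<Sigma>\<^sub>1\<close>, which is forbidden.\<close>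

lemma orcx_edge_ok_same_label: "orcx_edge_ok l l \<Longrightarrow> l \<in> {O1, R1, C1, o2}"
  by (cases l) (auto simp: orcx_edge_ok_def pair_in_def)

lemma orcx_node_ok_not_self_compatible:
  assumes "orcx_node_ok L"
  shows "\<exists>i < length L. \<not> orcx_edge_ok (L ! i) (L ! i)"
proof (rule ccontr)
  assume "\<not> ?thesis"
  then have self_ok: "L ! i \<in> {O1, R1, C1, o2}" if "i < length L" for i
    using that orcx_edge_ok_same_label by blast
  from assms obtain k k' where kk: "k < length L" "k' < length L" "k \<noteq> k'"
    and labels: "(L ! k \<in> {X1, x2} \<and> L ! k' \<in> {O1, o2}) \<or>
                 (L ! k \<in> {R1, r2} \<and> L ! k' \<in> {C1, c2})"
    and one_Sigma1: "card {k. k < length L \<and> in_Sigma1 (L ! k)} = 1"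
    unfolding orcx_node_ok_def by blast
  have "L ! k = R1" "L ! k' = C1"
    using labels self_ok[OF kk(1)] self_ok[OF kk(2)] by auto
  then have "{k, k'} \<subseteq> {k. k < length L \<and> in_Sigma1 (L ! k)}"
    using kk by (auto simp: in_Sigma1_def)
  then have "card {k, k'} \<le> card {k. k < length L \<and> in_Sigma1 (L ! k)}"
    by (intro card_mono) auto
  with one_Sigma1 kk(3) show False by simp
qed

text \<open>\<open>port_shift D a i\<close> is \<open>(i - a) mod D\<close> for \<open>a, i < D\<close>.\<close>
definition port_shift :: "nat \<Rightarrow> nat \<Rightarrow> nat \<Rightarrow> nat" where
  "port_shift D a i = (if a \<le> i then i - a else i + D - a)"

lemma port_shift_less: "a < D \<Longrightarrow> i < D \<Longrightarrow> port_shift D a i < D"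
  by (auto simp: port_shift_def)

lemma port_shift_port_shift: "a < D \<Longrightarrow> i < D \<Longrightarrow> port_shift D (port_shift D a i) i = a"
  by (auto simp: port_shift_def)

lemma inj_on_port_shift: "a < D \<Longrightarrow> inj_on (port_shift D a) {..<D}"
  by (auto simp: inj_on_def port_shift_def split: if_splits)

text \<open>Vertices \<open>a < D\<close> and \<open>D + b\<close> (\<open>b < D\<close>) are joined through port \<open>i\<close> at both ends,
  where \<open>i = (a + b) mod D\<close>.\<close>
definition complete_bipartite_nbr :: "nat \<Rightarrow> nat \<Rightarrow> nat \<Rightarrow> nat" where
  "complete_bipartite_nbr D v i =
     (if v < D then D + port_shift D v i else port_shift D (v - D) i)"

lemma port_graph_complete_bipartite:
  "port_graph D {..<2 * D} (complete_bipartite_nbr D) (\<lambda>v i. i)"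
  unfolding port_graph_def
proof (intro conjI ballI allI impI)
  fix v i assume v: "v \<in> {..<2 * D}" and i: "i < D"
  have side: "v - D < D" if "\<not> v < D" using v that by auto
  note facts = i side port_shift_less[of v D i] port_shift_less[of "v - D" D i]
    port_shift_port_shift[of v D i] port_shift_port_shift[of "v - D" D i]
  show "complete_bipartite_nbr D v i \<in> {..<2 * D}"
    and "complete_bipartite_nbr D (complete_bipartite_nbr D v i) i = v"
    and "complete_bipartite_nbr D v i \<noteq> v"
    using facts by (auto simp: complete_bipartite_nbr_def)
next
  fix v assume "v \<in> {..<2 * D}"
  then show "inj_on (complete_bipartite_nbr D v) {..<D}"
    using inj_on_port_shift[of v D] inj_on_port_shift[of "v - D" D]
    by (auto simp: inj_on_def complete_bipartite_nbr_def)
qed auto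

lemma proper_edge_coloring_complete_bipartite:
  "proper_edge_coloring D {..<2 * D} (complete_bipartite_nbr D) (\<lambda>v i. i) (\<lambda>v i. Suc i)"
  unfolding proper_edge_coloring_def by (auto simp: inj_on_def)

lemma solves_orcx_self_compatible_configuration:
  assumes "solves_orcx D A" and "0 < D"
  shows "\<exists>L. orcx_node_ok L \<and> (\<forall>i < length L. orcx_edge_ok (L ! i) (L ! i))"
proof -
  let ?col = "\<lambda>v i. Suc i"
  have valid: "\<forall>v\<in>{..<2 * D}. orcx_node_ok (map (zero_round_output D A ?col v) [0..<D])"
    "\<forall>v\<in>{..<2 * D}. \<forall>i<D. orcx_edge_ok (zero_round_output D A ?col v i)
        (zero_round_output D A ?col (complete_bipartite_nbr D v i) i)"
    using assms(1) port_graph_complete_bipartite proper_edge_coloring_complete_bipartite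
    unfolding solves_orcx_def by blast+
  have uniform: "zero_round_output D A ?col v = zero_round_output D A ?col 0" for v
    by (simp add: zero_round_output_def fun_eq_iff)
  have "0 \<in> {..<2 * D}" using assms(2) by simp
  then have "orcx_node_ok (map (zero_round_output D A ?col 0) [0..<D])
    \<and> (\<forall>i < D. orcx_edge_ok (zero_round_output D A ?col 0 i) (zero_round_output D A ?col 0 i))"
    using valid uniform by metis
  then show ?thesis by (intro exI[of _ "map (zero_round_output D A ?col 0) [0..<D]"]) simp
qed

theorem mainTheorem19:
  fixes \<Delta> :: nat
  assumes "\<Delta> \<ge> 3"
  shows "\<not> (\<exists>A. solves_orcx \<Delta> A)"
proof
  assume "\<exists>A. solves_orcx \<Delta> A"
  then obtain L where "orcx_node_ok L" and "\<forall>i < length L. orcx_edge_ok (L ! i) (L ! i)"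
    using assms solves_orcx_self_compatible_configuration[of \<Delta>] by auto
  then show False using orcx_node_ok_not_self_compatible by blast
qed

end
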